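(* Let $N\ge1$ and let $\mathbf a\in\mathbb{R}^{N+1}$ have either all coordinates strictly positive or all coordinates strictly negative. Let $\mathcal C_{\mathbf a}$, $\oplus_{\mathcal C_{\mathbf a}}$ and $\mathbf e_{\mathbf a}=\mathcal C_{\mathbf a}(\mathbf 1)$ be as in the context. Then the logarithm map $\mathrm{Log}_{\mathcal C_{\mathbf a}}:\Delta_N^0\to T_{\mathbf e_{\mathbf a}}\Delta_N^0$ of the Lie group $(\Delta_N^0,\oplus_{\mathcal C_{\mathbf a}})$ is given, for $\boldsymbol\lambda\in\Delta_N^0$ and $i=1,\dots,N+1$, by $$\big(\mathrm{Log}_{\mathcal C_{\mathbf a}}(\boldsymbol\lambda)\big)_i=(\mathbf e_{\mathbf a})_i\left(\ln\lambda_i-\frac{a_i}{\sum_{k=1}^{N+1}a_k(\mathbf e_{\mathbf a})_k}\sum_{j=1}^{N+1}(\mathbf e_{\mathbf a})_j\ln\lambda_j\right).$$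
   Context: $\mathbb{R}^{N+1}_{>0}$ is the open positive orthant, an abelian Lie group under componentwise multiplication $\mathbf x\oplus\mathbf y=(x_1y_1,\dots,x_{N+1}y_{N+1})$ with neutral element $\mathbf 1=(1,\dots,1)$. $\Delta_N^0=\{\boldsymbol\lambda\in\mathbb{R}^{N+1}_{>0}\mid\sum_i\lambda_i=1\}$. For $\mathbf a$ with all coordinates of the same strict sign and $\mathbf x\in\mathbb{R}^{N+1}_{>0}$, let $t_{\mathbf a}(\mathbf x)$ be the unique real solution $t$ of $\sum_{i=1}^{N+1}x_ie^{a_it}=1$, and set $\mathcal C_{\mathbf a}(\mathbf x)=(x_1e^{a_1t_{\mathbf a}(\mathbf x)},\dots,x_{N+1}e^{a_{N+1}t_{\mathbf a}(\mathbf x)})\in\Delta_N^0$ (the unique point of $\Delta_N^0$ on the curve $\{(x_ie^{ta_i})_i\mid t\in\mathbb{R}\}$). The group operation on $\Delta_N^0$ is $\boldsymbol\lambda\oplus_{\mathcal C_{\mathbf a}}\boldsymbol\mu=\mathcal C_{\mathbf a}(\boldsymbol\lambda\oplus\boldsymbol\mu)$; this makes $\Delta_N^0$ an abelian Lie group (isomorphic to the quotient of $(\mathbb{R}^{N+1}_{>0},\oplus)$ by $H_{\mathbf a}=\{(e^{ta_i})_i\mid t\in\mathbb{R}\}$) with neutral element $\mathbf e_{\mathbf a}=\mathcal C_{\mathbf a}(\mathbf 1)$ and Lie algebra identified with $T_{\mathbf e_{\mathbf a}}\Delta_N^0=\{\boldsymbol\xi\in\mathbb{R}^{N+1}\mid\sum_i\xi_i=0\}$.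 Its Lie group exponential map $\mathrm{Exp}_{\mathcal C_{\mathbf a}}:T_{\mathbf e_{\mathbf a}}\Delta_N^0\to\Delta_N^0$ is a global diffeomorphism, and $\mathrm{Log}_{\mathcal C_{\mathbf a}}$ denotes its inverse. *)

theory Defs
  imports "HOL-Analysis.Analysis"
begin

text \<open>Points of R^(N+1) are vectors of type real^'n with CARD('n) = N+1.\<close>

definition pos_orthant :: "(real^'n) set" where
  "pos_orthant = {x. \<forall>i. x $ i > 0}"

definition open_simplex :: "(real^'n) set" where
  "open_simplex = {l. (\<forall>i. l $ i > 0) \<and> (\<Sum>i\<in>UNIV. l $ i) = 1}"

definition cw_mult :: "real^'n \<Rightarrow> real^'n \<Rightarrow> real^'n" where
  "cw_mult x y = (\<chi> i. x $ i * y $ i)"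

definition t_a :: "real^'n \<Rightarrow> real^'n \<Rightarrow> real" where
  "t_a a x = (THE t. (\<Sum>i\<in>UNIV. x $ i * exp (a $ i * t)) = 1)"

definition C_a :: "real^'n \<Rightarrow> real^'n \<Rightarrow> real^'n" where
  "C_a a x = (\<chi> i. x $ i * exp (a $ i * t_a a x))"

definition opC :: "real^'n \<Rightarrow> real^'n \<Rightarrow> real^'n \<Rightarrow> real^'n" where
  "opC a l m = C_a a (cw_mult l m)"

definition e_a :: "real^'n \<Rightarrow> real^'n" where
  "e_a a = C_a a (\<chi> i. 1)"

definition tangent_space :: "(real^'n) set" where
  "tangent_space = {xi. (\<Sum>i\<in>UNIV. xi $ i) = 0}"

definition one_param_subgroup :: "real^'n \<Rightarrow> (real \<Rightarrow> real^'n) \<Rightarrow> bool" where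
  "one_param_subgroup a g \<longleftrightarrow>
     (\<forall>t. g t \<in> open_simplex) \<and>
     (\<forall>s t. g (s + t) = opC a (g s) (g t)) \<and>
     (\<forall>t. g differentiable (at t))"

definition Exp_C :: "real^'n \<Rightarrow> real^'n \<Rightarrow> real^'n" where
  "Exp_C a xi = (THE y. \<exists>g. one_param_subgroup a g \<and> (g has_vector_derivative xi) (at 0) \<and> y = g 1)"

definition Log_C :: "real^'n \<Rightarrow> real^'n \<Rightarrow> real^'n" where
  "Log_C a l = inv_into tangent_space (Exp_C a) l"

end

theory Submission
  imports Defs
begin

(* For sign-definite a, the map t -> sum_i x_i exp (a_i t) is strictly monotone and takes the
   value 1, so C_a is a well-defined projection of the positive orthant onto the open simplex along
   the cosets of H_a, and it is a homomorphism onto (open_simplex, opC a). Hence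
   t -> C_a (exp (t xi / e_a)) is a one-parameter subgroup, differentiable by the implicit function
   theorem, with velocity xi at 0. Conversely, in logarithmic coordinates every one-parameter
   subgroup is additive modulo the line R a, hence linear modulo that line, which makes the subgroup
   with velocity xi unique. So Exp xi = C_a (exp (xi / e_a)), and Exp xi = l holds iff
   xi_i = (e_a)_i (ln l_i - a_i s) for some s; the condition sum_i xi_i = 0 then determines s. *)

section \<open>Real calculus\<close>

lemma has_vector_derivative_vec_iff:
  fixes f :: "real \<Rightarrow> real^'n"
  shows "(f has_vector_derivative D) (at x) \<longleftrightarrow>
    (\<forall>i. ((\<lambda>t. f t $ i) has_real_derivative D $ i) (at x))"
  unfolding has_vector_derivative_def has_derivative_componentwise_within[of f]
  by (auto simp: Basis_vec_def inner_axis has_field_derivative_def mult_commute_abs)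

lemma additive_imp_linear:
  fixes h :: "real \<Rightarrow> real"
  assumes add: "\<And>s t. h (s + t) = h s + h t" and h': "(h has_real_derivative d) (at 0)"
  shows "h x = d * x"
proof -
  have "(h has_real_derivative d) (at y)" for y
  proof -
    have "h = (\<lambda>z. h y + h (z - y))"
      using add by (metis add.commute diff_add_cancel)
    moreover have "((\<lambda>z. h y + h (z - y)) has_real_derivative d) (at y)"
      using DERIV_shift[of h d y "- y"] h' by (auto intro: derivative_eq_intros)
    ultimately show ?thesis by simp
  qed
  then have "\<forall>y. ((\<lambda>y. h y - d * y) has_real_derivative 0) (at y)"
    by (auto intro!: derivative_eq_intros)
  from DERIV_isconst_all[OF this, of x 0] show ?thesis
    using add[of 0 0] by simp
qed

lemma additive_modulo_line_imp_linear:
  fixes G :: "'i::finite \<Rightarrow> real \<Rightarrow> real" and a D :: "'i \<Rightarrow> real"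
  assumes add: "\<And>s t. \<exists>\<tau>. \<forall>i. G i (s + t) = G i s + G i t + a i * \<tau>"
    and A: "(\<Sum>i\<in>UNIV. a i) \<noteq> 0"
    and G': "\<And>i. (G i has_real_derivative D i) (at 0)"
  shows "\<exists>r. \<forall>i. G i t = t * D i + a i * r"
proof -
  define A where "A = (\<Sum>i\<in>UNIV. a i)"
  \<comment> \<open>Subtracting the multiple a i / A of the coordinate sum cancels the \<tau>-terms.\<close>
  define h where "h i = (\<lambda>t. G i t - a i / A * (\<Sum>k\<in>UNIV. G k t))" for i
  have "h i t = (D i - a i / A * (\<Sum>k\<in>UNIV. D k)) * t" for i
  proof (rule additive_imp_linear)
    fix s t
    obtain \<tau> where \<tau>: "\<forall>i. G i (s + t) = G i s + G i t + a i * \<tau>"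
      using add by blast
    then have "(\<Sum>k\<in>UNIV. G k (s + t)) = (\<Sum>k\<in>UNIV. G k s) + (\<Sum>k\<in>UNIV. G k t) + A * \<tau>"
      by (simp add: sum.distrib A_def sum_distrib_right)
    then show "h i (s + t) = h i s + h i t"
      using \<tau> A by (simp add: h_def A_def field_simps)
  next
    show "(h i has_real_derivative D i - a i / A * (\<Sum>k\<in>UNIV. D k)) (at 0)"
      unfolding h_def by (intro DERIV_diff DERIV_cmult DERIV_sum G')
  qed
  then have "G i t = t * D i + a i * (((\<Sum>k\<in>UNIV. G k t) - t * (\<Sum>k\<in>UNIV. D k)) / A)" for i
    using A by (simp add: h_def A_def field_simps)
  then show ?thesis by blast
qed

lemma implicit_function_has_real_derivative:
  fixes F Ft Fy :: "real \<Rightarrow> real \<Rightarrow> real" and c :: "real \<Rightarrow> real"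
  assumes inj: "\<And>s. inj (F s)"
    and level: "\<And>s. F s (c s) = v"
    and F': "\<And>s y. ((\<lambda>p. F (fst p) (snd p)) has_derivative
        (\<lambda>q. fst q * Ft s y + snd q * Fy s y)) (at (s, y))"
    and Fy: "Fy t (c t) \<noteq> 0"
  shows "(c has_real_derivative - Ft t (c t) / Fy t (c t)) (at t)"
proof -
  define \<Phi> where "\<Phi> p = (fst p, F (fst p) (snd p))" for p :: "real \<times> real"
  define \<Psi> where "\<Psi> p = (fst p, inv (F (fst p)) (snd p))" for p :: "real \<times> real"
  define \<Phi>' where "\<Phi>' s y q = (fst q, fst q * Ft s y + snd q * Fy s y)"
    for s y and q :: "real \<times> real"
  define \<Psi>' where "\<Psi>' q = (fst q, (snd q - fst q * Ft t (c t)) / Fy t (c t))"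
    for q :: "real \<times> real"
  have \<Phi>_deriv: "(\<Phi> has_derivative \<Phi>' s y) (at (s, y))" for s y
    unfolding \<Phi>_def \<Phi>'_def
    by (intro has_derivative_Pair has_derivative_fst[OF has_derivative_ident] F')
  have "continuous_on UNIV \<Phi>"
    using \<Phi>_deriv has_derivative_continuous by (metis continuous_at_imp_continuous_on prod.collapse)
  moreover have "\<Psi> (\<Phi> p) = p" for p
    by (simp add: \<Psi>_def \<Phi>_def inv_f_f[OF inj])
  moreover have "\<Phi>' t (c t) \<circ> \<Psi>' = id"
    using Fy by (auto simp: \<Phi>'_def \<Psi>'_def fun_eq_iff)
  ultimately have "(\<Psi> has_derivative \<Psi>') (at (\<Phi> (t, c t)))"
    by (intro has_derivative_inverse_strong[OF open_UNIV UNIV_I _ _ \<Phi>_deriv]) auto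
  then have "(\<Psi> has_derivative \<Psi>') (at (t, v))"
    by (simp add: \<Phi>_def level)
  from has_derivative_snd[OF has_derivative_compose[OF
        has_derivative_Pair[OF has_derivative_ident has_derivative_const] this]]
  have "((\<lambda>s. snd (\<Psi> (s, v))) has_derivative (\<lambda>h. snd (\<Psi>' (h, 0)))) (at t)"
    by (simp add: o_def)
  moreover have "(\<lambda>h. snd (\<Psi>' (h, 0))) = (*) (- Ft t (c t) / Fy t (c t))"
    by (simp add: \<Psi>'_def fun_eq_iff)
  moreover have "snd (\<Psi> (s, v)) = c s" for s
    using inv_f_eq[OF inj level] by (simp add: \<Psi>_def)
  ultimately show ?thesis
    by (simp add: has_field_derivative_def)
qed

section \<open>The projection onto the simplex\<close>

definition sign_definite :: "real^'n \<Rightarrow> bool" where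
  "sign_definite a \<longleftrightarrow> (\<forall>i. a $ i > 0) \<or> (\<forall>i. a $ i < 0)"

lemma sign_definite_reflect:
  "sign_definite a \<Longrightarrow> (\<forall>i. a $ i > 0) \<or> (\<forall>i. (- a) $ i > 0)"
  unfolding sign_definite_def by auto

lemma sum_mult_sign_definite_nonzero:
  fixes a x :: "real^'n"
  assumes "sign_definite a" and x: "\<forall>i. x $ i > 0"
  shows "(\<Sum>i\<in>UNIV. a $ i * x $ i) \<noteq> 0"
proof -
  have pos: "(\<Sum>i\<in>UNIV. b $ i * x $ i) > 0" if "\<forall>i. b $ i > 0" for b :: "real^'n"
    using that x by (intro sum_pos) auto
  from sign_definite_reflect[OF assms(1)] show ?thesis
    using pos[of a] pos[of "- a"] by (auto simp: sum_negf)
qed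

lemma strict_mono_sum_exp:
  fixes a x :: "real^'n"
  assumes "\<forall>i. a $ i > 0" and "\<forall>i. x $ i > 0"
  shows "strict_mono (\<lambda>t. \<Sum>i\<in>UNIV. x $ i * exp (a $ i * t))"
  by (rule strict_monoI, rule sum_strict_mono) (auto simp: assms)

lemma sum_exp_eq_1_exists_pos:
  fixes a x :: "real^'n"
  assumes a: "\<forall>i. a $ i > 0" and x: "\<forall>i. x $ i > 0"
  shows "\<exists>t. (\<Sum>i\<in>UNIV. x $ i * exp (a $ i * t)) = 1"
proof -
  define S where "S t = (\<Sum>i\<in>UNIV. x $ i * exp (a $ i * t))" for t
  have "(S \<longlongrightarrow> 0) at_bot"
  proof -
    have "((\<lambda>t. x $ i * exp (a $ i * t)) \<longlongrightarrow> 0) at_bot" for i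
    proof -
      have "filterlim (\<lambda>t. a $ i * t) at_bot at_bot"
        using a by (intro filterlim_tendsto_pos_mult_at_bot[OF tendsto_const _ filterlim_ident]) auto
      from filterlim_compose[OF exp_at_bot this] show ?thesis
        by (rule tendsto_mult_right_zero)
    qed
    then show ?thesis unfolding S_def by (rule tendsto_null_sum)
  qed
  then have "\<forall>\<^sub>F t in at_bot. S t < 1"
    by (rule order_tendstoD) simp
  then obtain t0 where S0: "S t0 \<le> 1"
    unfolding eventually_at_bot_linorder by (meson order_refl less_imp_le)
  fix j :: 'n
  define t1 where "t1 = - ln (x $ j) / a $ j"
  have "x $ j > 0" "a $ j > 0" using a x by auto
  then have "x $ j * exp (a $ j * t1) = 1"
    by (simp add: t1_def exp_minus field_simps)
  moreover have "x $ j * exp (a $ j * t1) \<le> S t1"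
    unfolding S_def by (rule member_le_sum) (use x in \<open>auto intro: less_imp_le\<close>)
  ultimately have S1: "1 \<le> S t1" by simp
  have "t0 \<le> t1"
  proof (rule ccontr)
    assume "\<not> t0 \<le> t1"
    then have "S t1 < S t0"
      using strict_mono_sum_exp[OF a x] by (simp add: S_def strict_mono_def)
    with S0 S1 show False by simp
  qed
  moreover have "continuous_on {t0..t1} S"
    unfolding S_def by (intro continuous_intros)
  ultimately obtain t where "S t = 1"
    using IVT'[of S, OF S0 S1] by blast
  then show ?thesis unfolding S_def by blast
qed

lemma sum_exp_reflect:
  "(\<Sum>i\<in>UNIV. x $ i * exp ((- a) $ i * t)) = (\<Sum>i\<in>UNIV. x $ i * exp (a $ i * (- t)))"
  by simp

lemma inj_sum_exp:
  fixes a x :: "real^'n"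
  assumes "sign_definite a" and "\<forall>i. x $ i > 0"
  shows "inj (\<lambda>t. \<Sum>i\<in>UNIV. x $ i * exp (a $ i * t))"
  using sign_definite_reflect[OF assms(1)]
proof
  assume "\<forall>i. a $ i > 0"
  then show ?thesis by (rule strict_mono_imp_inj_on[OF strict_mono_sum_exp[OF _ assms(2)]])
next
  assume "\<forall>i. (- a) $ i > 0"
  then have inj_reflected: "inj (\<lambda>t. \<Sum>i\<in>UNIV. x $ i * exp ((- a) $ i * t))"
    by (rule strict_mono_imp_inj_on[OF strict_mono_sum_exp[OF _ assms(2)]])
  show ?thesis
  proof (rule injI)
    fix s t
    assume "(\<Sum>i\<in>UNIV. x $ i * exp (a $ i * s)) = (\<Sum>i\<in>UNIV. x $ i * exp (a $ i * t))"
    then have "(\<Sum>i\<in>UNIV. x $ i * exp ((- a) $ i * - s)) = (\<Sum>i\<in>UNIV. x $ i * exp ((- a) $ i * - t))"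
      by simp
    from injD[OF inj_reflected this] show "s = t" by simp
  qed
qed

lemma sum_exp_eq_1_exists:
  fixes a x :: "real^'n"
  assumes "sign_definite a" and "\<forall>i. x $ i > 0"
  shows "\<exists>t. (\<Sum>i\<in>UNIV. x $ i * exp (a $ i * t)) = 1"
  using sign_definite_reflect[OF assms(1)]
proof
  assume "\<forall>i. a $ i > 0"
  then show ?thesis by (rule sum_exp_eq_1_exists_pos[OF _ assms(2)])
next
  assume "\<forall>i. (- a) $ i > 0"
  then obtain t where "(\<Sum>i\<in>UNIV. x $ i * exp ((- a) $ i * t)) = 1"
    using sum_exp_eq_1_exists_pos[OF _ assms(2)] by blast
  then show ?thesis unfolding sum_exp_reflect by blast
qed

lemma t_a_sum_eq_1:
  fixes a x :: "real^'n"
  assumes "sign_definite a" and "\<forall>i. x $ i > 0"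
  shows "(\<Sum>i\<in>UNIV. x $ i * exp (a $ i * t_a a x)) = 1"
proof -
  have "\<exists>!t. (\<Sum>i\<in>UNIV. x $ i * exp (a $ i * t)) = 1"
    using sum_exp_eq_1_exists[OF assms] injD[OF inj_sum_exp[OF assms]] by (intro ex_ex1I) auto
  then show ?thesis unfolding t_a_def by (rule theI')
qed

lemma t_a_eqI:
  fixes a x :: "real^'n"
  assumes "sign_definite a" and "\<forall>i. x $ i > 0"
    and "(\<Sum>i\<in>UNIV. x $ i * exp (a $ i * s)) = 1"
  shows "t_a a x = s"
  using injD[OF inj_sum_exp[OF assms(1,2)]] t_a_sum_eq_1[OF assms(1,2)] assms(3) by simp

lemma C_a_nth: "C_a a x $ i = x $ i * exp (a $ i * t_a a x)"
  by (simp add: C_a_def)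

lemma C_a_in_open_simplex:
  fixes a x :: "real^'n"
  assumes "sign_definite a" and "\<forall>i. x $ i > 0"
  shows "C_a a x \<in> open_simplex"
  using t_a_sum_eq_1[OF assms] assms(2) by (simp add: open_simplex_def C_a_nth)

lemma C_a_eqI:
  fixes a x y :: "real^'n"
  assumes "sign_definite a" and "\<forall>i. x $ i > 0" and "y \<in> open_simplex"
    and "\<forall>i. y $ i = x $ i * exp (a $ i * s)"
  shows "C_a a x = y"
proof -
  have "(\<Sum>i\<in>UNIV. x $ i * exp (a $ i * s)) = 1"
    using assms(3,4) by (simp add: open_simplex_def)
  then have "t_a a x = s" by (rule t_a_eqI[OF assms(1,2)])
  then show ?thesis using assms(4) by (simp add: vec_eq_iff C_a_nth)
qed

lemma C_a_mult_exp:
  fixes a x :: "real^'n"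
  assumes a: "sign_definite a" and x: "\<forall>i. x $ i > 0"
  shows "C_a a (\<chi> i. x $ i * exp (a $ i * s)) = C_a a x"
proof (rule C_a_eqI[OF a _ C_a_in_open_simplex[OF a x], where s = "t_a a x - s"])
  show "\<forall>i. C_a a x $ i = (\<chi> i. x $ i * exp (a $ i * s)) $ i * exp (a $ i * (t_a a x - s))"
    by (simp add: C_a_nth mult.assoc flip: exp_add) (simp add: algebra_simps)
qed (use x in simp)

lemma opC_C_a:
  fixes a x y :: "real^'n"
  assumes a: "sign_definite a" and x: "\<forall>i. x $ i > 0" and y: "\<forall>i. y $ i > 0"
  shows "opC a (C_a a x) (C_a a y) = C_a a (cw_mult x y)"
proof -
  have "cw_mult (C_a a x) (C_a a y) = (\<chi> i. cw_mult x y $ i * exp (a $ i * (t_a a x + t_a a y)))"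
    by (simp add: vec_eq_iff cw_mult_def C_a_nth algebra_simps exp_add)
  then show ?thesis
    using C_a_mult_exp[OF a, of "cw_mult x y"] x y by (simp add: opC_def cw_mult_def)
qed

lemma e_a_pos: "sign_definite a \<Longrightarrow> e_a a $ i > 0"
  using C_a_in_open_simplex[of a "\<chi> i. 1"] by (simp add: e_a_def open_simplex_def)

section \<open>One-parameter subgroups\<close>

lemma opC_nth: "opC a x y $ i = x $ i * y $ i * exp (a $ i * t_a a (cw_mult x y))"
  by (simp add: opC_def C_a_nth cw_mult_def)

lemma one_param_subgroup_pos: "one_param_subgroup a g \<Longrightarrow> g t $ i > 0"
  unfolding one_param_subgroup_def open_simplex_def by blast

lemma one_param_subgroup_at_0:
  fixes a :: "real^'n"
  assumes a: "sign_definite a" and g: "one_param_subgroup a g"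
  shows "g 0 = e_a a"
proof -
  define \<tau> where "\<tau> = t_a a (cw_mult (g 0) (g 0))"
  have "g 0 $ i = g 0 $ i * g 0 $ i * exp (a $ i * \<tau>)" for i
    using g unfolding one_param_subgroup_def \<tau>_def by (metis add_0 opC_nth)
  then have "g 0 $ i * exp (a $ i * \<tau>) = 1" for i
    using one_param_subgroup_pos[OF g, of 0 i]
    by (metis mult.assoc mult_1_right mult_left_cancel less_irrefl)
  then have "g 0 $ i = 1 * exp (a $ i * - \<tau>)" for i
    by (simp add: exp_minus field_simps)
  then have "C_a a (\<chi> i. 1) = g 0"
    using g unfolding one_param_subgroup_def by (intro C_a_eqI[OF a, where s = "- \<tau>"]) auto
  then show ?thesis
    by (simp add: e_a_def)
qed

lemma one_param_subgroup_eq: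
  fixes a xi :: "real^'n"
  assumes a: "sign_definite a" and g: "one_param_subgroup a g"
    and g': "(g has_vector_derivative xi) (at 0)"
  shows "g t = C_a a (\<chi> i. exp (t * (xi $ i / e_a a $ i)))"
proof -
  have "\<exists>r. \<forall>i. ln (g t $ i) = t * (xi $ i / e_a a $ i) + a $ i * r"
  proof (rule additive_modulo_line_imp_linear[where G = "\<lambda>i t. ln (g t $ i)"])
    fix s t
    have "g (s + t) = opC a (g s) (g t)"
      using g unfolding one_param_subgroup_def by blast
    then show "\<exists>\<tau>. \<forall>i. ln (g (s + t) $ i) = ln (g s $ i) + ln (g t $ i) + a $ i * \<tau>"
      using one_param_subgroup_pos[OF g] one_param_subgroup_pos[OF g, THEN order_less_imp_not_eq2]
      by (intro exI[of _ "t_a a (cw_mult (g s) (g t))"]) (simp add: opC_nth ln_mult)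
  next
    show "(\<Sum>i\<in>UNIV. a $ i) \<noteq> 0"
      using sum_mult_sign_definite_nonzero[OF a, of "\<chi> i. 1"] by simp
  next
    fix i
    have "((\<lambda>t. g t $ i) has_real_derivative xi $ i) (at 0)"
      using g' has_vector_derivative_vec_iff by blast
    from DERIV_chain2[OF DERIV_ln[OF one_param_subgroup_pos[OF g]] this]
    show "((\<lambda>t. ln (g t $ i)) has_real_derivative xi $ i / e_a a $ i) (at 0)"
      by (simp add: one_param_subgroup_at_0[OF a g] divide_inverse mult.commute)
  qed
  then obtain r where "ln (g t $ i) = t * (xi $ i / e_a a $ i) + a $ i * r" for i
    by blast
  then have "g t $ i = exp (t * (xi $ i / e_a a $ i)) * exp (a $ i * r)" for i
    using one_param_subgroup_pos[OF g] by (metis exp_add exp_ln)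
  then have "C_a a (\<chi> i. exp (t * (xi $ i / e_a a $ i))) = g t"
    using g unfolding one_param_subgroup_def by (intro C_a_eqI[OF a]) auto
  then show ?thesis by simp
qed

lemma t_a_exp_has_real_derivative:
  fixes a b :: "real^'n" and t :: real
  assumes a: "sign_definite a"
  defines "w \<equiv> C_a a (\<chi> i. exp (t * b $ i))"
  shows "((\<lambda>s. t_a a (\<chi> i. exp (s * b $ i))) has_real_derivative
    - (\<Sum>i\<in>UNIV. b $ i * w $ i) / (\<Sum>i\<in>UNIV. a $ i * w $ i)) (at t)"
proof -
  define c where "c = (\<lambda>s. t_a a (\<chi> i. exp (s * b $ i)))"
  define F where "F s = (\<lambda>y. \<Sum>i\<in>UNIV. exp (s * b $ i) * exp (a $ i * y))" for s
  define Ft where "Ft s y = (\<Sum>i\<in>UNIV. b $ i * (exp (s * b $ i) * exp (a $ i * y)))" for s y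
  define Fy where "Fy s y = (\<Sum>i\<in>UNIV. a $ i * (exp (s * b $ i) * exp (a $ i * y)))" for s y
  have pos: "\<forall>i. (\<chi> i. exp (s * b $ i)) $ i > 0" for s
    by simp
  have "(c has_real_derivative - Ft t (c t) / Fy t (c t)) (at t)"
  proof (rule implicit_function_has_real_derivative[where F = F])
    show "inj (F s)" for s
      using inj_sum_exp[OF a pos[of s]] by (simp add: F_def)
    show "F s (c s) = 1" for s
      using t_a_sum_eq_1[OF a pos[of s]] by (simp add: F_def c_def)
    show "((\<lambda>p. F (fst p) (snd p)) has_derivative
        (\<lambda>q. fst q * Ft s y + snd q * Fy s y)) (at (s, y))" for s y
      unfolding F_def Ft_def Fy_def
      by (rule derivative_eq_intros refl | simp add: sum_distrib_left algebra_simps sum.distrib)+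
    show "Fy t (c t) \<noteq> 0"
      using sum_mult_sign_definite_nonzero[OF a, of "\<chi> i. exp (t * b $ i) * exp (a $ i * c t)"]
      by (simp add: Fy_def)
  qed
  then show ?thesis
    by (simp add: Ft_def Fy_def w_def c_def C_a_nth)
qed

lemma C_a_exp_has_vector_derivative:
  fixes a b :: "real^'n" and t :: real
  assumes a: "sign_definite a"
  defines "w \<equiv> C_a a (\<chi> i. exp (t * b $ i))"
  shows "((\<lambda>s. C_a a (\<chi> i. exp (s * b $ i))) has_vector_derivative
    (\<chi> i. w $ i * (b $ i - a $ i * (\<Sum>j\<in>UNIV. b $ j * w $ j) / (\<Sum>j\<in>UNIV. a $ j * w $ j))))
    (at t)"
proof (unfold has_vector_derivative_vec_iff, intro allI)
  fix i
  note t_a' = t_a_exp_has_real_derivative[OF a, of b t, folded w_def]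
  show "((\<lambda>s. C_a a (\<chi> i. exp (s * b $ i)) $ i) has_real_derivative
      (\<chi> i. w $ i * (b $ i - a $ i * (\<Sum>j\<in>UNIV. b $ j * w $ j) / (\<Sum>j\<in>UNIV. a $ j * w $ j))) $ i)
      (at t)"
    unfolding C_a_nth vec_lambda_beta
    by (auto intro!: derivative_eq_intros t_a' simp: w_def C_a_nth algebra_simps)
qed

lemma one_param_subgroup_C_a_exp:
  fixes a b :: "real^'n"
  assumes a: "sign_definite a"
  shows "one_param_subgroup a (\<lambda>t. C_a a (\<chi> i. exp (t * b $ i)))"
  unfolding one_param_subgroup_def
proof (intro conjI allI)
  fix s t
  have "(\<chi> i. exp ((s + t) * b $ i)) = cw_mult (\<chi> i. exp (s * b $ i)) (\<chi> i. exp (t * b $ i))"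
    by (simp add: vec_eq_iff cw_mult_def distrib_right exp_add)
  then show "C_a a (\<chi> i. exp ((s + t) * b $ i)) =
      opC a (C_a a (\<chi> i. exp (s * b $ i))) (C_a a (\<chi> i. exp (t * b $ i)))"
    by (simp add: opC_C_a[OF a])
next
  fix t
  show "C_a a (\<chi> i. exp (t * b $ i)) \<in> open_simplex"
    by (rule C_a_in_open_simplex[OF a]) simp
  show "(\<lambda>t. C_a a (\<chi> i. exp (t * b $ i))) differentiable at t"
    using C_a_exp_has_vector_derivative[OF a] differentiableI_vector by blast
qed

section \<open>Exponential and logarithm\<close>

lemma Exp_C_eq:
  fixes a xi :: "real^'n"
  assumes a: "sign_definite a" and xi: "xi \<in> tangent_space"
  shows "Exp_C a xi = C_a a (\<chi> i. exp (xi $ i / e_a a $ i))"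
proof -
  define b where "b = (\<chi> i. xi $ i / e_a a $ i)"
  define g where "g = (\<lambda>t. C_a a (\<chi> i. exp (t * b $ i)))"
  have e: "e_a a $ i \<noteq> 0" for i
    using e_a_pos[OF a, of i] by simp
  have "C_a a (\<chi> i. exp (0 * b $ i)) = e_a a"
    by (simp add: e_a_def)
  moreover have "(\<chi> i. e_a a $ i * (b $ i - a $ i * (\<Sum>j\<in>UNIV. b $ j * e_a a $ j) /
      (\<Sum>j\<in>UNIV. a $ j * e_a a $ j))) = xi"
    using xi e by (simp add: b_def tangent_space_def vec_eq_iff)
  ultimately have g': "(g has_vector_derivative xi) (at 0)"
    using C_a_exp_has_vector_derivative[OF a, of b 0] unfolding g_def by simp
  have g: "one_param_subgroup a g"
    unfolding g_def by (rule one_param_subgroup_C_a_exp[OF a])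
  show ?thesis
    unfolding Exp_C_def
  proof (rule the_equality)
    show "\<exists>g. one_param_subgroup a g \<and> (g has_vector_derivative xi) (at 0) \<and>
        C_a a (\<chi> i. exp (xi $ i / e_a a $ i)) = g 1"
      using g g' by (intro exI[of _ g]) (simp add: g_def b_def)
  next
    fix y
    assume "\<exists>g. one_param_subgroup a g \<and> (g has_vector_derivative xi) (at 0) \<and> y = g 1"
    then show "y = C_a a (\<chi> i. exp (xi $ i / e_a a $ i))"
      using one_param_subgroup_eq[OF a, of _ xi 1] by auto
  qed
qed

lemma Exp_C_eq_iff:
  fixes a x l :: "real^'n"
  assumes a: "sign_definite a" and x: "x \<in> tangent_space" and l: "l \<in> open_simplex"
  shows "Exp_C a x = l \<longleftrightarrow> (\<exists>s. \<forall>i. x $ i = e_a a $ i * (ln (l $ i) - a $ i * s))"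
proof
  have e: "e_a a $ i > 0" for i
    by (rule e_a_pos[OF a])
  assume "Exp_C a x = l"
  then have "l = C_a a (\<chi> i. exp (x $ i / e_a a $ i))"
    by (simp add: Exp_C_eq[OF a x])
  then have "ln (l $ i) = x $ i / e_a a $ i + a $ i * t_a a (\<chi> i. exp (x $ i / e_a a $ i))" for i
    by (simp add: C_a_nth ln_mult)
  then have "x $ i = e_a a $ i * (ln (l $ i) - a $ i * t_a a (\<chi> i. exp (x $ i / e_a a $ i)))" for i
    using e[of i] by (simp add: field_simps)
  then show "\<exists>s. \<forall>i. x $ i = e_a a $ i * (ln (l $ i) - a $ i * s)"
    by blast
next
  assume "\<exists>s. \<forall>i. x $ i = e_a a $ i * (ln (l $ i) - a $ i * s)"
  then obtain s where s: "x $ i = e_a a $ i * (ln (l $ i) - a $ i * s)" for i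
    by blast
  have "l $ i = exp (x $ i / e_a a $ i) * exp (a $ i * s)" for i
    using e_a_pos[OF a, of i] l by (simp add: s exp_add[symmetric] open_simplex_def)
  then have "C_a a (\<chi> i. exp (x $ i / e_a a $ i)) = l"
    by (intro C_a_eqI[OF a _ l]) auto
  then show "Exp_C a x = l"
    by (simp add: Exp_C_eq[OF a x])
qed

lemma scaled_line_in_tangent_space_iff:
  fixes a e m :: "real^'n"
  assumes "(\<Sum>i\<in>UNIV. a $ i * e $ i) \<noteq> 0"
  shows "(\<chi> i. e $ i * (m $ i - a $ i * s)) \<in> tangent_space \<longleftrightarrow>
    s = (\<Sum>i\<in>UNIV. e $ i * m $ i) / (\<Sum>i\<in>UNIV. a $ i * e $ i)"
proof -
  have "(\<Sum>i\<in>UNIV. e $ i * (m $ i - a $ i * s)) =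
      (\<Sum>i\<in>UNIV. e $ i * m $ i) - s * (\<Sum>i\<in>UNIV. a $ i * e $ i)"
    by (simp add: algebra_simps sum_subtractf sum_distrib_left)
  then show ?thesis
    using assms by (auto simp: tangent_space_def field_simps)
qed

lemma tangent_space_Exp_C_eq_iff:
  fixes a l x :: "real^'n"
  assumes a: "sign_definite a" and l: "l \<in> open_simplex"
  defines "s \<equiv> (\<Sum>j\<in>UNIV. e_a a $ j * ln (l $ j)) / (\<Sum>k\<in>UNIV. a $ k * e_a a $ k)"
  shows "x \<in> tangent_space \<and> Exp_C a x = l \<longleftrightarrow>
    x = (\<chi> i. e_a a $ i * (ln (l $ i) - a $ i * s))"
proof -
  have "(\<Sum>k\<in>UNIV. a $ k * e_a a $ k) \<noteq> 0"
    using sum_mult_sign_definite_nonzero[OF a] e_a_pos[OF a] by blast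
  note tangent_iff = scaled_line_in_tangent_space_iff[OF this, of "\<chi> i. ln (l $ i)", simplified]
  show ?thesis
  proof
    assume x: "x \<in> tangent_space \<and> Exp_C a x = l"
    then obtain s' where "\<forall>i. x $ i = e_a a $ i * (ln (l $ i) - a $ i * s')"
      using Exp_C_eq_iff[OF a _ l] by blast
    then have "x = (\<chi> i. e_a a $ i * (ln (l $ i) - a $ i * s'))"
      by (simp add: vec_eq_iff)
    moreover from this have "s' = s"
      using x tangent_iff by (simp add: s_def)
    ultimately show "x = (\<chi> i. e_a a $ i * (ln (l $ i) - a $ i * s))"
      by simp
  next
    assume x: "x = (\<chi> i. e_a a $ i * (ln (l $ i) - a $ i * s))"
    have "(\<chi> i. e_a a $ i * (ln (l $ i) - a $ i * s)) \<in> tangent_space"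
      unfolding tangent_iff by (simp add: s_def)
    with x show "x \<in> tangent_space \<and> Exp_C a x = l"
      using Exp_C_eq_iff[OF a _ l] by auto
  qed
qed

theorem theorem1:
  fixes a l :: "real^'n"
  assumes "CARD('n) \<ge> 2"
    and "(\<forall>i. a $ i > 0) \<or> (\<forall>i. a $ i < 0)"
    and "l \<in> open_simplex"
  shows "Log_C a l =
    (\<chi> i. e_a a $ i * (ln (l $ i)
       - a $ i / (\<Sum>k\<in>UNIV. a $ k * e_a a $ k) * (\<Sum>j\<in>UNIV. e_a a $ j * ln (l $ j))))"
proof -
  have a: "sign_definite a"
    using assms(2) unfolding sign_definite_def .
  note Exp_iff = tangent_space_Exp_C_eq_iff[OF a assms(3)]
  have "Log_C a l = (\<chi> i. e_a a $ i * (ln (l $ i) - a $ i *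
      ((\<Sum>j\<in>UNIV. e_a a $ j * ln (l $ j)) / (\<Sum>k\<in>UNIV. a $ k * e_a a $ k))))"
    unfolding Log_C_def inv_into_def by (rule some_equality) (use Exp_iff in blast)+
  then show ?thesis
    by simp
qed

end
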